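(* For every infinite $\lambda$-term $M$: $\lambda.M$ is derivable in $\mathbf{Reg}^{+}$ if and only if $\lambda.M$ is derivable in $\mathbf{Reg}^{+}_0$.
   Context: Infinite $\lambda$-terms are possibly infinite terms built from variables, abstractions and applications, modulo $\alpha$-equivalence. A prefixed term is $\lambda x_1\ldots x_n.M$ ($n\ge0$, distinct variables, separate abstraction prefix; $\lambda.M$ for empty prefix) with the free variables of $M$ among the $x_i$. Proof system $\mathbf{Reg}^{+}$ (finite natural-deduction trees of prefixed terms): axiom (nlvar) $\lambda\vec{x}y.y$; $(\lambda)$: from $\lambda\vec{x}y.M_0$ infer $\lambda\vec{x}.\lambda y.M_0$; $(@)$: from $\lambda\vec{x}.M_0$ and $\lambda\vec{x}.M_1$ infer $\lambda\vec{x}.(M_0\,M_1)$; $(\mathrm{del}^{+})$: from $\lambda x_1\ldots x_{n-1}.M$ infer $\lambda x_1\ldots x_n.M$ if $x_n$ is not free in $M$; (FIX,$u$): if $\mathcal{D}_0$ is a derivation of depth $\ge1$ of $\lambda\vec{x}.M$ possibly with open assumption leaves $[\lambda\vec{x}.M]^u$, infer $\lambda\vec{x}.M$, discharging them. $\mathbf{Reg}^{+}_0$: same axioms and rules, but each instance of (FIX,$u$) must additionally satisfy: every $\lambda\vec{y}.N$ on a thread in $\mathcal{D}_0$ from an open marked assumption $(\lambda\vec{x}.M)^u$ downwards has $|\vec{y}|\ge|\vec{x}|$. A prefixed term is derivable in a system if there is a finite derivation of it in which every marked assumption is discharged by some instance of (FIX). *)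

theory Defs
  imports Main
begin

text \<open>Infinite lambda-terms modulo alpha-equivalence, represented by (possibly
infinite) de Bruijn terms. Index 0 refers to the innermost enclosing binder.\<close>
codatatype iterm = Var nat | Abs iterm | App iterm iterm

coinductive closed_in :: "nat \<Rightarrow> iterm \<Rightarrow> bool" where
  "i < n \<Longrightarrow> closed_in n (Var i)"
| "closed_in (Suc n) M \<Longrightarrow> closed_in n (Abs M)"
| "closed_in n M0 \<Longrightarrow> closed_in n M1 \<Longrightarrow> closed_in n (App M0 M1)"

primcorec shift :: "nat \<Rightarrow> iterm \<Rightarrow> iterm" where
  "shift k t = (case t of
      Var i \<Rightarrow> Var (if i < k then i else Suc i)
    | Abs s \<Rightarrow> Abs (shift (Suc k) s)
    | App a b \<Rightarrow> App (shift k a) (shift k b))"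

text \<open>A prefixed term \<lambda>x1...xn.M is represented as (n, M), the variable x_i
being de Bruijn index n - i inside M.\<close>
type_synonym pterm = "nat \<times> iterm"

datatype drv =
    Nlvar nat
  | Hyp nat pterm
  | LamI drv
  | AppI drv drv
  | DelI drv
  | FixI nat drv

fun concl :: "drv \<Rightarrow> pterm" where
  "concl (Nlvar n) = (Suc n, Var 0)"
| "concl (Hyp u A) = A"
| "concl (LamI d) = (fst (concl d) - 1, Abs (snd (concl d)))"
| "concl (AppI d e) = (fst (concl d), App (snd (concl d)) (snd (concl e)))"
| "concl (DelI d) = (Suc (fst (concl d)), shift 0 (snd (concl d)))"
| "concl (FixI u d) = concl d"

fun open_hyps :: "drv \<Rightarrow> (nat \<times> pterm) set" where
  "open_hyps (Nlvar n) = {}"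
| "open_hyps (Hyp u A) = {(u, A)}"
| "open_hyps (LamI d) = open_hyps d"
| "open_hyps (AppI d e) = open_hyps d \<union> open_hyps e"
| "open_hyps (DelI d) = open_hyps d"
| "open_hyps (FixI u d) = {h \<in> open_hyps d. fst h \<noteq> u}"

fun is_leaf :: "drv \<Rightarrow> bool" where
  "is_leaf (Nlvar n) = True"
| "is_leaf (Hyp u A) = True"
| "is_leaf _ = False"

text \<open>Thread condition of Reg+_0: every formula on a thread from an open
assumption marked u down to the root has prefix length at least k.\<close>
fun threads_ok :: "nat \<Rightarrow> nat \<Rightarrow> drv \<Rightarrow> bool" where
  "threads_ok u k (Nlvar n) = True"
| "threads_ok u k (Hyp v A) = (v = u \<longrightarrow> k \<le> fst A)"
| "threads_ok u k (LamI d) =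
     (((\<exists>A. (u, A) \<in> open_hyps (LamI d)) \<longrightarrow> k \<le> fst (concl (LamI d))) \<and> threads_ok u k d)"
| "threads_ok u k (AppI d e) =
     (((\<exists>A. (u, A) \<in> open_hyps (AppI d e)) \<longrightarrow> k \<le> fst (concl (AppI d e)))
       \<and> threads_ok u k d \<and> threads_ok u k e)"
| "threads_ok u k (DelI d) =
     (((\<exists>A. (u, A) \<in> open_hyps (DelI d)) \<longrightarrow> k \<le> fst (concl (DelI d))) \<and> threads_ok u k d)"
| "threads_ok u k (FixI v d) =
     (((\<exists>A. (u, A) \<in> open_hyps (FixI v d)) \<longrightarrow> k \<le> fst (concl (FixI v d)))
       \<and> (v \<noteq> u \<longrightarrow> threads_ok u k d))"

text \<open>Correctness of a derivation; the flag r0 selects Reg+_0 (True) or Reg+ (False).\<close>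
fun valid :: "bool \<Rightarrow> drv \<Rightarrow> bool" where
  "valid r0 (Nlvar n) = True"
| "valid r0 (Hyp u A) = closed_in (fst A) (snd A)"
| "valid r0 (LamI d) = (valid r0 d \<and> 0 < fst (concl d))"
| "valid r0 (AppI d e) = (valid r0 d \<and> valid r0 e \<and> fst (concl d) = fst (concl e))"
| "valid r0 (DelI d) = valid r0 d"
| "valid r0 (FixI u d) =
     (valid r0 d \<and> \<not> is_leaf d
      \<and> (\<forall>A. (u, A) \<in> open_hyps d \<longrightarrow> A = concl d)
      \<and> (r0 \<longrightarrow> threads_ok u (fst (concl d)) d))"

definition derivable_Reg_plus :: "pterm \<Rightarrow> bool" where
  "derivable_Reg_plus A = (\<exists>d. valid False d \<and> open_hyps d = {} \<and> concl d = A)"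

definition derivable_Reg_plus0 :: "pterm \<Rightarrow> bool" where
  "derivable_Reg_plus0 A = (\<exists>d. valid True d \<and> open_hyps d = {} \<and> concl d = A)"

end

theory Submission
  imports Defs "HOL-Library.Multiset_Order"
begin

text \<open>Let S be the finite set of conclusions of a closed Reg+ derivation. Every element of S
follows from elements of S by one instance of (nlvar), (\<lambda>), (@) or (del+): for the formula of a
marked assumption this is the rule applied just below the FIX discharging it. Conversely, such
a set yields Reg+_0 derivations of its elements. Derive J by its rule and close with a FIX at J
whose assumptions are labelled by J itself. Along the way keep a stack of the judgements whose
FIX is still pending: a premise already on the stack becomes an assumption; any other premise P
is pushed, after discarding the pending judgements with a longer prefix than P. This keeps the
prefix of every formula on a thread below an assumption at least as long as the assumption's. A push
removes one judgement of depth d from the complement of the stack and adds back only judgements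
of smaller depth, depth being measured down from the longest prefix occurring in S, so the
multiset of these depths decreases and the construction terminates.\<close>

lemma closed_in_shift:
  assumes "closed_in n M" "k \<le> n"
  shows "closed_in (Suc n) (shift k M)"
proof -
  have "closed_in m T" if "\<exists>n k M. m = Suc n \<and> T = shift k M \<and> k \<le> n \<and> closed_in n M" for m T
    using that
  proof (coinduction arbitrary: m T rule: closed_in.coinduct)
    case closed_in
    then obtain n k M where eqs: "m = Suc n" "T = shift k M" "k \<le> n" and "closed_in n M" by blast
    from \<open>closed_in n M\<close> show ?case
      by (cases rule: closed_in.cases) (use eqs in \<open>auto simp: shift.ctr\<close>)
  qed
  then show ?thesis using assms by blast
qed

lemma valid_imp_closed_concl: "valid r d \<Longrightarrow> closed_in (fst (concl d)) (snd (concl d))"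
  by (induction d) (auto intro: closed_in.intros closed_in_shift)

lemma valid_True_imp_valid_False: "valid True d \<Longrightarrow> valid False d"
  by (induction d) auto

lemma threads_ok_if_label_unused: "\<forall>A. (u, A) \<notin> open_hyps d \<Longrightarrow> threads_ok u k d"
  by (induction d) auto

fun concls :: "drv \<Rightarrow> pterm set" where
  "concls (Nlvar n) = {concl (Nlvar n)}"
| "concls (Hyp u A) = {A}"
| "concls (LamI d) = insert (concl (LamI d)) (concls d)"
| "concls (AppI d e) = insert (concl (AppI d e)) (concls d \<union> concls e)"
| "concls (DelI d) = insert (concl (DelI d)) (concls d)"
| "concls (FixI u d) = insert (concl (FixI u d)) (concls d)"

lemma finite_concls: "finite (concls d)"
  by (induction d) auto

lemma concl_in_concls: "concl d \<in> concls d"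
  by (cases d) auto

lemma valid_imp_closed_concls: "valid r d \<Longrightarrow> J \<in> concls d \<Longrightarrow> closed_in (fst J) (snd J)"
proof (induction d arbitrary: J)
  case (LamI d)
  then show ?case using valid_imp_closed_concl[OF LamI.prems(1)] by (auto simp del: concl.simps)
next
  case (AppI d e)
  then show ?case using valid_imp_closed_concl[OF AppI.prems(1)] by (auto simp del: concl.simps)
next
  case (DelI d)
  then show ?case using valid_imp_closed_concl[OF DelI.prems(1)] by (auto simp del: concl.simps)
next
  case (FixI u d)
  then show ?case using valid_imp_closed_concl[OF FixI.prems(1)] by (auto simp del: concl.simps)
qed (auto intro: closed_in.intros)

definition inferable_from :: "pterm set \<Rightarrow> pterm \<Rightarrow> bool" where
  "inferable_from S J \<longleftrightarrow> (\<exists>n. J = (Suc n, Var 0))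
     \<or> (\<exists>n N. J = (n, Abs N) \<and> (Suc n, N) \<in> S)
     \<or> (\<exists>n A B. J = (n, App A B) \<and> (n, A) \<in> S \<and> (n, B) \<in> S)
     \<or> (\<exists>n N. J = (Suc n, shift 0 N) \<and> (n, N) \<in> S)"

lemma inferable_from_mono: "inferable_from S J \<Longrightarrow> S \<subseteq> T \<Longrightarrow> inferable_from T J"
  unfolding inferable_from_def by blast

lemma valid_imp_inferable_concl:
  "valid r d \<Longrightarrow> \<forall>u A. d \<noteq> Hyp u A \<Longrightarrow> inferable_from (concls d) (concl d)"
proof (induction d)
  case (LamI d)
  then obtain n where "fst (concl d) = Suc n" by (cases "fst (concl d)") auto
  moreover have "concl d \<in> concls (LamI d)" using concl_in_concls[of d] by simp
  ultimately show ?case unfolding inferable_from_def by (cases "concl d") auto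
next
  case (AppI d e)
  then have "fst (concl d) = fst (concl e)" by simp
  moreover have "concl d \<in> concls (AppI d e)" "concl e \<in> concls (AppI d e)"
    using concl_in_concls[of d] concl_in_concls[of e] by auto
  ultimately show ?case unfolding inferable_from_def by (cases "concl d", cases "concl e") auto
next
  case (DelI d)
  have "concl d \<in> concls (DelI d)" using concl_in_concls[of d] by simp
  then show ?case unfolding inferable_from_def by (cases "concl d") auto
next
  case (FixI u d)
  then show ?case by (cases d) (auto intro: inferable_from_mono)
qed (auto simp: inferable_from_def)

lemma valid_imp_inferable_concls:
  assumes "valid False d" "concls d \<subseteq> S" "\<forall>h\<in>open_hyps d. inferable_from S (snd h)"
  shows "\<forall>J\<in>concls d. inferable_from S J"
  using assms
proof (induction d)
  case (Nlvar n)
  show ?case by (simp add: inferable_from_def)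
next
  case (Hyp u A)
  then show ?case by simp
next
  case (LamI d)
  have "inferable_from S (concl (LamI d))"
    using inferable_from_mono[OF valid_imp_inferable_concl[OF LamI.prems(1)]] LamI.prems(2) by simp
  with LamI.IH LamI.prems show ?case by (simp del: concl.simps)
next
  case (AppI d e)
  have "inferable_from S (concl (AppI d e))"
    using inferable_from_mono[OF valid_imp_inferable_concl[OF AppI.prems(1)]] AppI.prems(2) by simp
  with AppI.IH AppI.prems show ?case by (simp add: ball_Un del: concl.simps)
next
  case (DelI d)
  have "inferable_from S (concl (DelI d))"
    using inferable_from_mono[OF valid_imp_inferable_concl[OF DelI.prems(1)]] DelI.prems(2) by simp
  with DelI.IH DelI.prems show ?case by (simp del: concl.simps)
next
  case (FixI u d)
  have "valid False d" "\<forall>v A. d \<noteq> Hyp v A" using FixI.prems(1) by (auto elim: is_leaf.elims)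
  then have concl_d: "inferable_from S (concl d)"
    using inferable_from_mono[OF valid_imp_inferable_concl] FixI.prems(2) by simp
  have "inferable_from S (snd h)" if "h \<in> open_hyps d" for h
  proof (cases "fst h = u")
    case True
    with that FixI.prems(1) have "snd h = concl d" unfolding valid.simps by (metis prod.collapse)
    with concl_d show ?thesis by simp
  next
    case False
    with that FixI.prems(3) show ?thesis by (cases h) auto
  qed
  with FixI.IH FixI.prems(1,2) concl_d show ?case by simp
qed

definition labelled :: "(pterm \<Rightarrow> nat) \<Rightarrow> pterm set \<Rightarrow> (nat \<times> pterm) set" where
  "labelled lab H = (\<lambda>h. (lab h, h)) ` H"

text \<open>The pending judgements H are the assumptions available to d, each h marked with label
lab h. The thread condition is required for every label of H, open or not, since it is exactly
what the FIX eventually discharging h will demand.\<close>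

definition reg0_derivation :: "(pterm \<Rightarrow> nat) \<Rightarrow> pterm set \<Rightarrow> drv \<Rightarrow> pterm \<Rightarrow> bool" where
  "reg0_derivation lab H d J \<longleftrightarrow> valid True d \<and> concl d = J \<and> open_hyps d \<subseteq> labelled lab H
     \<and> (\<forall>h\<in>H. threads_ok (lab h) (fst h) d)"

lemma reg0_derivation_Hyp:
  assumes "closed_in (fst J) (snd J)" "J \<in> H" "inj_on lab H"
  shows "reg0_derivation lab H (Hyp (lab J) J) J"
  using assms by (auto simp: reg0_derivation_def labelled_def dest: inj_onD)

lemma reg0_derivation_transfer:
  assumes d: "reg0_derivation lab G d J" and hyps: "open_hyps d \<subseteq> labelled lab H"
    and inj: "inj_on lab (G \<union> H)"
  shows "reg0_derivation lab H d J"
proof -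
  have "threads_ok (lab h) (fst h) d" if "h \<in> H" for h
  proof (cases "h \<in> G")
    case True
    with d show ?thesis by (simp add: reg0_derivation_def)
  next
    case False
    have "(lab h, A) \<notin> open_hyps d" for A
    proof
      assume "(lab h, A) \<in> open_hyps d"
      with d obtain g where "g \<in> G" "lab h = lab g"
        by (auto simp: reg0_derivation_def labelled_def)
      with inj \<open>h \<in> H\<close> False show False by (auto dest: inj_onD)
    qed
    then show ?thesis by (simp add: threads_ok_if_label_unused)
  qed
  with d hyps show ?thesis by (simp add: reg0_derivation_def)
qed

lemma reg0_derivation_by_rule:
  assumes "inferable_from S J" and prems: "\<forall>P\<in>S. \<exists>e. reg0_derivation lab H e P"
    and below: "\<forall>h\<in>H. fst h \<le> fst J"
  shows "\<exists>r. reg0_derivation lab H r J \<and> (is_leaf r \<longrightarrow> open_hyps r = {})"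
proof -
  from assms(1) consider (nlvar) n where "J = (Suc n, Var 0)"
    | (lam) n N where "J = (n, Abs N)" "(Suc n, N) \<in> S"
    | (app) n A B where "J = (n, App A B)" "(n, A) \<in> S" "(n, B) \<in> S"
    | (del) n N where "J = (Suc n, shift 0 N)" "(n, N) \<in> S"
    unfolding inferable_from_def by blast
  then show ?thesis
  proof cases
    case nlvar
    then show ?thesis by (intro exI[of _ "Nlvar n"]) (simp add: reg0_derivation_def)
  next
    case lam
    with prems obtain e where "reg0_derivation lab H e (Suc n, N)" by blast
    with lam below show ?thesis by (intro exI[of _ "LamI e"]) (auto simp: reg0_derivation_def)
  next
    case app
    with prems obtain e f where "reg0_derivation lab H e (n, A)" "reg0_derivation lab H f (n, B)"
      by blast
    with app below show ?thesis by (intro exI[of _ "AppI e f"]) (auto simp: reg0_derivation_def)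
  next
    case del
    with prems obtain e where "reg0_derivation lab H e (n, N)" by blast
    with del below show ?thesis by (intro exI[of _ "DelI e"]) (auto simp: reg0_derivation_def)
  qed
qed

lemma reg0_derivation_FixI:
  assumes r: "reg0_derivation lab H r J" "\<not> is_leaf r"
    and "J \<in> H" and below: "\<forall>h\<in>H. fst h \<le> fst J" and inj: "inj_on lab H"
  shows "reg0_derivation lab (H - {J}) (FixI (lab J) r) J"
proof -
  have discharged: "A = J" if "(lab J, A) \<in> open_hyps r" for A
    using that r(1) inj \<open>J \<in> H\<close> by (auto simp: reg0_derivation_def labelled_def dest: inj_onD)
  have "valid True (FixI (lab J) r)"
    using r \<open>J \<in> H\<close> discharged by (auto simp: reg0_derivation_def)
  moreover have "open_hyps (FixI (lab J) r) \<subseteq> labelled lab (H - {J})"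
  proof
    fix x assume "x \<in> open_hyps (FixI (lab J) r)"
    then have "x \<in> open_hyps r" "fst x \<noteq> lab J" by auto
    with r(1) obtain h where "h \<in> H" "x = (lab h, h)"
      by (auto simp: reg0_derivation_def labelled_def)
    with \<open>fst x \<noteq> lab J\<close> show "x \<in> labelled lab (H - {J})" by (auto simp: labelled_def)
  qed
  ultimately show ?thesis
    using r(1) below by (auto simp: reg0_derivation_def)
qed

definition unstacked_depths :: "pterm set \<Rightarrow> pterm set \<Rightarrow> nat multiset" where
  "unstacked_depths S H = image_mset (\<lambda>h. Max (fst ` S) - fst h) (mset_set (S - H))"

lemma unstacked_depths_push:
  assumes "finite S" "P \<in> S" "P \<notin> H"
  shows "unstacked_depths S (insert P {h\<in>H. fst h \<le> fst P}) < unstacked_depths S H"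
proof -
  define depth where "depth = (\<lambda>h::pterm. Max (fst ` S) - fst h)"
  define I where "I = S - H - {P}"
  define K where "K = {h\<in>S \<inter> H. fst P < fst h}"
  have "S - insert P {h\<in>H. fst h \<le> fst P} = I \<union> K" "S - H = insert P I"
    using assms(2,3) by (auto simp: I_def K_def)
  moreover have "finite I" "finite K" "I \<inter> K = {}" "P \<notin> I"
    using assms(1) by (auto simp: I_def K_def)
  ultimately have split:
    "unstacked_depths S (insert P {h\<in>H. fst h \<le> fst P})
      = image_mset depth (mset_set I) + image_mset depth (mset_set K)"
    "unstacked_depths S H = image_mset depth (mset_set I) + {#depth P#}"
    unfolding unstacked_depths_def depth_def[symmetric] by (simp_all add: mset_set_Union)
  have "depth h < depth P" if "h \<in> K" for h
  proof -
    from that assms(1) have "fst P < fst h" "fst h \<le> Max (fst ` S)" by (auto simp: K_def)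
    then show ?thesis by (simp add: depth_def)
  qed
  with \<open>finite K\<close> have "multp (<) (image_mset depth (mset_set I) + image_mset depth (mset_set K))
      (image_mset depth (mset_set I) + {#depth P#})"
    by (intro one_step_implies_multp) auto
  then show ?thesis unfolding split less_multiset_def .
qed

lemma reg0_derivation_exists:
  assumes fin: "finite S" and inferable: "\<forall>J\<in>S. inferable_from S J"
    and closed: "\<forall>J\<in>S. closed_in (fst J) (snd J)" and inj: "inj_on lab S"
  shows "H \<subseteq> S \<Longrightarrow> J \<in> H \<Longrightarrow> \<forall>h\<in>H. fst h \<le> fst J \<Longrightarrow>
    \<exists>d. reg0_derivation lab (H - {J}) d J"
proof (induction "unstacked_depths S H" arbitrary: H J rule: less_induct)
  case (less H J)
  have inj_H: "inj_on lab H" using inj less.prems(1) by (rule inj_on_subset)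
  have prems: "\<exists>e. reg0_derivation lab H e P" if "P \<in> S" for P
  proof (cases "P \<in> H")
    case True
    with closed inj_H \<open>P \<in> S\<close> show ?thesis by (blast intro: reg0_derivation_Hyp)
  next
    case False
    let ?G = "insert P {h\<in>H. fst h \<le> fst P}"
    have "unstacked_depths S ?G < unstacked_depths S H"
      using fin \<open>P \<in> S\<close> False by (rule unstacked_depths_push)
    moreover have "?G \<subseteq> S" using less.prems(1) \<open>P \<in> S\<close> by blast
    ultimately have "\<exists>e. reg0_derivation lab (?G - {P}) e P"
      by (intro less.hyps) auto
    then obtain e where e: "reg0_derivation lab (?G - {P}) e P" ..
    moreover have "open_hyps e \<subseteq> labelled lab H"
      using e by (auto simp: reg0_derivation_def labelled_def)
    moreover have "inj_on lab ((?G - {P}) \<union> H)"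
      using inj_H by (rule inj_on_subset) auto
    ultimately show ?thesis by (blast intro: reg0_derivation_transfer)
  qed
  obtain r where r: "reg0_derivation lab H r J" "is_leaf r \<longrightarrow> open_hyps r = {}"
    using reg0_derivation_by_rule[of S J lab H] inferable less.prems prems by blast
  show ?case
  proof (cases "is_leaf r")
    case True
    with r(2) have "open_hyps r \<subseteq> labelled lab (H - {J})" by simp
    moreover have "inj_on lab (H \<union> (H - {J}))" by (rule inj_on_subset[OF inj_H]) blast
    ultimately have "reg0_derivation lab (H - {J}) r J"
      by (rule reg0_derivation_transfer[OF r(1)])
    then show ?thesis ..
  next
    case False
    with r less.prems inj_H show ?thesis by (blast intro: reg0_derivation_FixI)
  qed
qed

lemma derivable_Reg_plus_imp_Reg_plus0:
  assumes "derivable_Reg_plus A"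
  shows "derivable_Reg_plus0 A"
proof -
  obtain d0 where d0: "valid False d0" "open_hyps d0 = {}" "concl d0 = A"
    using assms unfolding derivable_Reg_plus_def by blast
  define S where "S = concls d0"
  have "finite S" unfolding S_def by (rule finite_concls)
  moreover have "\<forall>J\<in>S. inferable_from S J"
    unfolding S_def using valid_imp_inferable_concls d0(1,2) by simp
  moreover have "\<forall>J\<in>S. closed_in (fst J) (snd J)"
    unfolding S_def using valid_imp_closed_concls d0(1) by blast
  moreover obtain lab :: "pterm \<Rightarrow> nat" where "inj_on lab S"
    using \<open>finite S\<close> finite_imp_inj_to_nat_seg by blast
  moreover have "A \<in> S" unfolding S_def using concl_in_concls d0(3) by blast
  ultimately obtain d where "reg0_derivation lab {} d A"
    using reg0_derivation_exists[of S lab "{A}" A] by auto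
  then show ?thesis
    unfolding derivable_Reg_plus0_def by (auto simp: reg0_derivation_def labelled_def)
qed

lemma derivable_Reg_plus_iff_Reg_plus0: "derivable_Reg_plus A \<longleftrightarrow> derivable_Reg_plus0 A"
  using derivable_Reg_plus_imp_Reg_plus0 valid_True_imp_valid_False
  unfolding derivable_Reg_plus_def derivable_Reg_plus0_def by blast

theorem mainTheorem3:
  fixes M :: iterm
  assumes "closed_in 0 M"
  shows "derivable_Reg_plus (0, M) \<longleftrightarrow> derivable_Reg_plus0 (0, M)"
  by (rule derivable_Reg_plus_iff_Reg_plus0)

end
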